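(* Let $\beta_1,\dots,\beta_N\in\mathbb R$ satisfy $(d-1)\sum_i\beta_i^2+(\sum_i\beta_i)^2=1$. Then the map $T_\beta$ is a quantum channel whose Choi matrix is $C_\beta$.
   Context: Fix $d\ge2$, $N\ge1$. For a permutation $\sigma$ of $\{0,\dots,n-1\}$, $\Pi_\sigma(v_0\otimes\cdots\otimes v_{n-1})=v_{\sigma^{-1}(0)}\otimes\cdots\otimes v_{\sigma^{-1}(n-1)}$ on $(\mathbb C^d)^{\otimes n}$. On $(\mathbb C^d)^{\otimes(N+1)}$ (factors $0,\dots,N$), $\Pi_\sigma^\Gamma$ is the partial transpose on factor $0$ and $\Sigma_{a,b}=\{\sigma:\sigma(0)=a,\sigma(b)=0\}$. Define $C_\beta=\frac{d}{\binom{N+d-1}{N}}\frac{N+d-1}{N}\sum_{1\le a,b\le N}\sum_{\sigma\in\Sigma_{a,b}}\frac{\beta_a\beta_b}{(N-1)!}\Pi_\sigma^\Gamma$. Let $P_\beta=\frac1{N!}\sum_{\sigma}\beta_{\sigma(0)+1}\Pi_\sigma$, summed over permutations $\sigma$ of $\{0,\dots,N-1\}$ (operators on $(\mathbb C^d)^{\otimes N}$), and $T_\beta(\rho)=\frac{dN(N+d-1)}{\binom{N+d-1}{N}}P_\beta(\rho\otimes I^{\otimes(N-1)})P_\beta^{\mathsf T}$, with ${}^{\mathsf T}$ the transpose in the standard basis. The Choi matrix of $T$ is $C_T=\sum_{i,j}|i\rangle\langle j|\otimes T(|i\rangle\langle j|)$; a quantum channel is a completely positive trace-preserving linear map. *)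

theory Defs
  imports Complex_Main "HOL-Combinatorics.Permutations"
begin

text \<open>Operators on (C^d)^{tensor n} are represented by their matrix entries in the
standard product basis: a basis vector is a list x of length n with entries < d
(x ! k is the index of the basis vector in tensor factor k).\<close>

type_synonym op = "nat list \<Rightarrow> nat list \<Rightarrow> complex"

definition idx :: "nat \<Rightarrow> nat \<Rightarrow> nat list set" where
  "idx d n = {xs. length xs = n \<and> set xs \<subseteq> {..<d}}"

text \<open>Pi_sigma (v_0 x ... x v_{n-1}) = v_{sigma^-1 0} x ... x v_{sigma^-1 (n-1)}:
 the entry <x| Pi_sigma |y> is 1 iff x ! (sigma j) = y ! j for all j < n.\<close>
definition perm_op :: "nat \<Rightarrow> (nat \<Rightarrow> nat) \<Rightarrow> op" where
  "perm_op n \<sigma> x y = (if (\<forall>j<n. x ! (\<sigma> j) = y ! j) then 1 else 0)"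

definition ptrans0 :: "op \<Rightarrow> op" where
  "ptrans0 A x y = A (x[0 := y ! 0]) (y[0 := x ! 0])"

definition op_mult :: "nat \<Rightarrow> nat \<Rightarrow> op \<Rightarrow> op \<Rightarrow> op" where
  "op_mult d n A B x z = (\<Sum>y\<in>idx d n. A x y * B y z)"

definition op_transpose :: "op \<Rightarrow> op" where
  "op_transpose A x y = A y x"

text \<open>rho tensor I^{tensor (N-1)}, rho a d x d matrix acting on factor 0.\<close>
definition tensor_id :: "(nat \<Rightarrow> nat \<Rightarrow> complex) \<Rightarrow> op" where
  "tensor_id \<rho> x y = \<rho> (x ! 0) (y ! 0) * (if tl x = tl y then 1 else 0)"

definition Sigma_ab :: "nat \<Rightarrow> nat \<Rightarrow> nat \<Rightarrow> (nat \<Rightarrow> nat) set" where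
  "Sigma_ab N a b = {\<sigma>. \<sigma> permutes {..N} \<and> \<sigma> 0 = a \<and> \<sigma> b = 0}"

definition C_beta :: "nat \<Rightarrow> nat \<Rightarrow> (nat \<Rightarrow> real) \<Rightarrow> op" where
  "C_beta d N \<beta> x y =
     complex_of_real (real d / real ((N + d - 1) choose N) * (real (N + d - 1) / real N)) *
     (\<Sum>a\<in>{1..N}. \<Sum>b\<in>{1..N}. \<Sum>\<sigma>\<in>Sigma_ab N a b.
        complex_of_real (\<beta> a * \<beta> b / fact (N - 1)) * ptrans0 (perm_op (Suc N) \<sigma>) x y)"

definition P_beta :: "nat \<Rightarrow> (nat \<Rightarrow> real) \<Rightarrow> op" where
  "P_beta N \<beta> x y = complex_of_real (1 / fact N) *
     (\<Sum>\<sigma>\<in>{\<sigma>. \<sigma> permutes {..<N}}. complex_of_real (\<beta> (\<sigma> 0 + 1)) * perm_op N \<sigma> x y)"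

definition T_beta :: "nat \<Rightarrow> nat \<Rightarrow> (nat \<Rightarrow> real) \<Rightarrow> (nat \<Rightarrow> nat \<Rightarrow> complex) \<Rightarrow> op" where
  "T_beta d N \<beta> \<rho> x y =
     complex_of_real (real d * real N * real (N + d - 1) / real ((N + d - 1) choose N)) *
     op_mult d N (op_mult d N (P_beta N \<beta>) (tensor_id \<rho>)) (op_transpose (P_beta N \<beta>)) x y"

text \<open>Choi matrix C_T = sum_{i,j} |i><j| (x) T(|i><j|), an operator on N+1 factors
(factor 0 = input space C^d).\<close>
definition unit_mat :: "nat \<Rightarrow> nat \<Rightarrow> nat \<Rightarrow> nat \<Rightarrow> complex" where
  "unit_mat i j = (\<lambda>k l. if k = i \<and> l = j then 1 else 0)"

definition choi :: "nat \<Rightarrow> ((nat \<Rightarrow> nat \<Rightarrow> complex) \<Rightarrow> op) \<Rightarrow> op" where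
  "choi d T x y = (\<Sum>i<d. \<Sum>j<d.
      unit_mat i j (hd x) (hd y) * T (unit_mat i j) (tl x) (tl y))"

definition psd :: "'a set \<Rightarrow> ('a \<Rightarrow> 'a \<Rightarrow> complex) \<Rightarrow> bool" where
  "psd S A \<longleftrightarrow> (\<forall>x\<in>S. \<forall>y\<in>S. A y x = cnj (A x y)) \<and>
     (\<forall>v. let q = (\<Sum>x\<in>S. \<Sum>y\<in>S. cnj (v x) * A x y * v y) in Im q = 0 \<and> Re q \<ge> 0)"

text \<open>A quantum channel from d x d matrices to operators on (C^d)^{tensor n}:
 linear, completely positive (id_k (x) T positive for every k), trace preserving.\<close>
definition quantum_channel :: "nat \<Rightarrow> nat \<Rightarrow> ((nat \<Rightarrow> nat \<Rightarrow> complex) \<Rightarrow> op) \<Rightarrow> bool" where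
  "quantum_channel d n T \<longleftrightarrow>
     (\<forall>a b X Y. \<forall>x\<in>idx d n. \<forall>y\<in>idx d n.
        T (\<lambda>i j. a * X i j + b * Y i j) x y = a * T X x y + b * T Y x y) \<and>
     (\<forall>k>0. \<forall>X :: nat \<times> nat \<Rightarrow> nat \<times> nat \<Rightarrow> complex.
        psd ({..<k} \<times> {..<d}) X \<longrightarrow>
        psd ({..<k} \<times> idx d n) (\<lambda>(a, x) (b, y). T (\<lambda>i j. X (a, i) (b, j)) x y)) \<and>
     (\<forall>X. (\<Sum>x\<in>idx d n. T X x x) = (\<Sum>i<d. X i i))"

end

theory Submission
  imports Defs
begin

text \<open>Splitting off the first tensor factor, the entries of \<open>T\<^sub>\<beta>(\<rho>)\<close> are
  \<open>K \<Sum>\<^sub>c\<^sub>,\<^sub>e \<rho>\<^sub>c\<^sub>e \<Sum>\<^sub>w \<langle>x|P|c w\<rangle> \<langle>y|P|e w\<rangle>\<close>: a Kraus decomposition with real Kraus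
  operators, which gives linearity and complete positivity at once.  At matrix units this is the
  Choi matrix, a sum over pairs \<open>(\<sigma>, \<tau>)\<close> of permutations of \<open>N\<close> points whose tails match;
  the reindexing \<open>(\<sigma>, \<tau>) \<mapsto> \<sigma>' \<circ> (0 1) \<circ> \<tau>'\<inverse>\<close>, with \<open>\<pi>'\<close> the shift of \<open>\<pi>\<close> to \<open>{1..N}\<close>,
  turns them into the permutations in \<open>\<Sigma>\<^sub>a\<^sub>,\<^sub>b\<close> and the contraction of tails into a partial
  transpose.  For the trace, the basis vectors contributing to \<open>tr \<Pi>\<^sub>\<sigma> (|c\<rangle>\<langle>e| \<otimes> I) \<Pi>\<^sub>\<tau>\<^sup>T\<close>
  are the \<open>d\<close>-colourings invariant under \<open>\<tau> \<sigma>\<inverse>\<close>; summing their numbers over all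
  permutations gives \<open>d (d + 1) \<cdots> (d + N - 1) = N! (N+d-1 choose N)\<close>, and the weights combine to
  \<open>((d - 1) \<Sum> \<beta>\<^sub>i\<^sup>2 + (\<Sum> \<beta>\<^sub>i)\<^sup>2) / d\<close>, which the hypothesis makes \<open>1 / d\<close>.\<close>

lemma finite_idx [simp]: "finite (idx d n)"
  unfolding idx_def using finite_lists_length_eq[of "{..<d}" n] by (simp add: conj_commute)

lemma nth_idx_less: "x \<in> idx d n \<Longrightarrow> k < n \<Longrightarrow> x ! k < d"
  unfolding idx_def using nth_mem by fastforce

lemma idx_SucE:
  assumes "x \<in> idx d (Suc n)"
  obtains c w where "x = c # w" "c < d" "w \<in> idx d n"
  using assms by (cases x) (auto simp: idx_def)

lemma sum_idx_Suc: "(\<Sum>x\<in>idx d (Suc n). f x) = (\<Sum>c<d. \<Sum>w\<in>idx d n. f (c # w))"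
proof -
  have idx: "idx d (Suc n) = (\<lambda>(c, w). c # w) ` ({..<d} \<times> idx d n)"
  proof (rule set_eqI)
    fix xs show "xs \<in> idx d (Suc n) \<longleftrightarrow> xs \<in> (\<lambda>(c, w). c # w) ` ({..<d} \<times> idx d n)"
      by (cases xs) (auto simp: idx_def)
  qed
  have inj: "inj_on (\<lambda>(c, w). c # w) ({..<d} \<times> idx d n)"
    by (auto simp: inj_on_def)
  show ?thesis
    unfolding idx sum.reindex[OF inj] by (simp add: sum.cartesian_product split_def)
qed

lemma card_filter_idx_eq_PiE:
  assumes "\<And>f g. \<forall>k<n. f k = g k \<Longrightarrow> P f = P g"
  shows "card {x \<in> idx d n. P ((!) x)} = card {f \<in> PiE {..<n} (\<lambda>_. {..<d}). P f}"
proof (rule bij_betw_same_card)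
  show "bij_betw (\<lambda>x. restrict ((!) x) {..<n}) {x \<in> idx d n. P ((!) x)}
      {f \<in> PiE {..<n} (\<lambda>_. {..<d}). P f}"
  proof (rule bij_betw_byWitness[where f' = "\<lambda>f. map f [0..<n]"])
    show "\<forall>x\<in>{x \<in> idx d n. P ((!) x)}. map (restrict ((!) x) {..<n}) [0..<n] = x"
      by (auto simp: idx_def list_eq_iff_nth_eq)
    show "\<forall>f\<in>{f \<in> PiE {..<n} (\<lambda>_. {..<d}). P f}. restrict ((!) (map f [0..<n])) {..<n} = f"
      by (auto simp: PiE_def extensional_def fun_eq_iff)
    show "(\<lambda>x. restrict ((!) x) {..<n}) ` {x \<in> idx d n. P ((!) x)}
        \<subseteq> {f \<in> PiE {..<n} (\<lambda>_. {..<d}). P f}"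
    proof (intro image_subsetI CollectI conjI)
      fix x assume x: "x \<in> {x \<in> idx d n. P ((!) x)}"
      then show "restrict ((!) x) {..<n} \<in> PiE {..<n} (\<lambda>_. {..<d})"
        by (auto simp: nth_idx_less)
      show "P (restrict ((!) x) {..<n})"
        using x assms[of "restrict ((!) x) {..<n}" "(!) x"] by simp
    qed
    show "(\<lambda>f. map f [0..<n]) ` {f \<in> PiE {..<n} (\<lambda>_. {..<d}). P f} \<subseteq> {x \<in> idx d n. P ((!) x)}"
    proof (intro image_subsetI CollectI conjI)
      fix f assume f: "f \<in> {f \<in> PiE {..<n} (\<lambda>_. {..<d}). P f}"
      then show "map f [0..<n] \<in> idx d n"
        by (auto simp: idx_def PiE_def Pi_iff)
      show "P ((!) (map f [0..<n]))"
        using f assms[of "(!) (map f [0..<n])" f] by simp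
    qed
  qed
qed

lemma sum_indicator_eq_card:
  "finite A \<Longrightarrow> (\<Sum>x\<in>A. if P x then 1 else 0) = (of_nat (card {x \<in> A. P x}) :: 'b::semiring_1)"
  using sum.inter_filter[of A "\<lambda>_. 1 :: 'b" P] by simp

lemma sum_permutes_apply:
  fixes h :: "'a \<Rightarrow> real"
  assumes "finite S" "a \<in> S"
  shows "(\<Sum>p\<in>{p. p permutes S}. h (p a)) = fact (card S - 1) * sum h S"
proof -
  define S' where "S' = S - {a}"
  have S: "S = insert a S'" "a \<notin> S'" "finite S'" "card S' = card S - 1"
    using assms by (auto simp: S'_def)
  have "(\<Sum>p\<in>{p. p permutes S}. h (p a))
      = (\<Sum>b\<in>S. \<Sum>q\<in>{q. q permutes S'}. h ((Transposition.transpose a b \<circ> q) a))"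
    using sum_over_permutations_insert[OF S(3,2), of "\<lambda>p. h (p a)"] unfolding S(1) .
  also have "\<dots> = (\<Sum>b\<in>S. \<Sum>q\<in>{q. q permutes S'}. h b)"
    by (intro sum.cong refl) (simp add: permutes_not_in[OF _ S(2)])
  also have "\<dots> = fact (card S - 1) * sum h S"
    using card_permutations[OF refl S(3)] S(4) by (simp add: sum_distrib_left)
  finally show ?thesis .
qed

lemma card_permutes_apply:
  assumes "finite S" "a \<in> S" "b \<in> S"
  shows "card {p. p permutes S \<and> p a = b} = fact (card S - 1)"
proof -
  have "real (card {p. p permutes S \<and> p a = b})
      = (\<Sum>p\<in>{p. p permutes S}. if p a = b then 1 else 0)"
    using sum_indicator_eq_card[OF finite_permutations[OF assms(1)], of "\<lambda>p. p a = b", where 'b = real]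
    by simp
  also have "\<dots> = real (fact (card S - 1))"
    using sum_permutes_apply[OF assms(1,2), of "\<lambda>c. if c = b then 1 else 0"] assms by simp
  finally show ?thesis
    by (simp only: of_nat_eq_iff)
qed

lemma permutes_agree_off_point:
  assumes "finite S" "\<sigma> permutes S" "\<tau> permutes S" "a \<in> S"
    and "\<forall>k\<in>S - {a}. f (\<sigma> k) = f (\<tau> k)"
  shows "f (\<sigma> a) = f (\<tau> a)"
proof -
  let ?I = "\<lambda>k. if f k = f (\<sigma> a) then 1 else (0::nat)"
  have "(\<Sum>k\<in>S. ?I (\<sigma> k)) = (\<Sum>k\<in>S. ?I (\<tau> k))"
    using sum.permute[OF assms(2), of ?I] sum.permute[OF assms(3), of ?I] by simp
  moreover have "(\<Sum>k\<in>S - {a}. ?I (\<sigma> k)) = (\<Sum>k\<in>S - {a}. ?I (\<tau> k))"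
    using assms(5) by (intro sum.cong) auto
  ultimately have "?I (\<tau> a) = 1"
    using assms(1,4) by (simp add: sum.remove)
  then show ?thesis by (simp split: if_splits)
qed

definition lift_perm :: "(nat \<Rightarrow> nat) \<Rightarrow> nat \<Rightarrow> nat" where
  "lift_perm \<pi> l = (case l of 0 \<Rightarrow> 0 | Suc m \<Rightarrow> Suc (\<pi> m))"

lemma lift_perm_simps [simp]: "lift_perm \<pi> 0 = 0" "lift_perm \<pi> (Suc m) = Suc (\<pi> m)"
  by (simp_all add: lift_perm_def)

lemma permutes_lift_perm:
  assumes "\<pi> permutes {..<n}"
  shows "lift_perm \<pi> permutes {..n}"
proof -
  have "lift_perm (inv \<pi>) (lift_perm \<pi> l) = l" "lift_perm \<pi> (lift_perm (inv \<pi>) l) = l" for l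
    by (cases l; simp add: permutes_inverses[OF assms])+
  moreover have "lift_perm \<pi> l = l" if "l \<notin> {..n}" for l
    using that permutes_not_in[OF assms] by (cases l) auto
  ultimately show ?thesis
    unfolding permutes_def by metis
qed

lemma lift_perm_inj: "lift_perm \<pi> = lift_perm \<pi>' \<Longrightarrow> \<pi> = \<pi>'"
proof
  fix m assume "lift_perm \<pi> = lift_perm \<pi>'"
  then have "lift_perm \<pi> (Suc m) = lift_perm \<pi>' (Suc m)" by simp
  then show "\<pi> m = \<pi>' m" by simp
qed

section \<open>Colourings invariant under a permutation\<close>

definition invariant_colourings :: "nat \<Rightarrow> 'a set \<Rightarrow> ('a \<Rightarrow> 'a) \<Rightarrow> ('a \<Rightarrow> nat) set" where
  "invariant_colourings d S \<mu> = {f \<in> PiE S (\<lambda>_. {..<d}). \<forall>k\<in>S. f (\<mu> k) = f k}"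

lemma finite_invariant_colourings [simp]: "finite S \<Longrightarrow> finite (invariant_colourings d S \<mu>)"
  unfolding invariant_colourings_def
  by (rule finite_subset[OF _ finite_PiE[of S "\<lambda>_. {..<d}"]]) auto

text \<open>Inserting a point \<open>a\<close> into the cycle of \<open>b\<close> (or as a fixed point if \<open>b = a\<close>) leaves the
  invariant colourings of the old points unchanged and forces \<open>a\<close> to share the colour of \<open>b\<close>.\<close>

lemma invariant_colourings_insert:
  assumes "a \<notin> S" "q permutes S" "b \<in> insert a S"
  shows "invariant_colourings d (insert a S) (Transposition.transpose a b \<circ> q)
    = (\<lambda>(c, g). g(a := c)) ` {(c, g) \<in> {..<d} \<times> invariant_colourings d S q. b = a \<or> c = g b}"
proof -
  let ?\<mu> = "Transposition.transpose a b \<circ> q"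
  have qa: "q a = a" and qS: "k \<in> S \<Longrightarrow> q k \<in> S" for k
    using permutes_not_in[OF assms(2,1)] permutes_in_image[OF assms(2)] by auto
  have swap: "f (Transposition.transpose a b z) = f z" if "f a = f b" for f :: "'a \<Rightarrow> nat" and z
    using that by (auto simp: Transposition.transpose_def)
  show ?thesis
  proof (rule set_eqI, rule iffI)
    fix f assume f: "f \<in> invariant_colourings d (insert a S) ?\<mu>"
    define g where "g = f(a := undefined)"
    have fab: "f a = f b"
      using f qa unfolding invariant_colourings_def by (auto simp: Transposition.transpose_def)
    have "g \<in> invariant_colourings d S q"
      unfolding invariant_colourings_def
    proof (intro CollectI conjI ballI)
      show "g \<in> PiE S (\<lambda>_. {..<d})"
        using f assms(1) unfolding invariant_colourings_def g_def by (auto simp: PiE_def extensional_def)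
      fix k assume k: "k \<in> S"
      have "f (q k) = f k"
        using f k swap[OF fab, of "q k"] unfolding invariant_colourings_def by auto
      then show "g (q k) = g k"
        using qS[OF k] k assms(1) unfolding g_def by auto
    qed
    moreover have "f a < d"
      using f unfolding invariant_colourings_def by auto
    moreover have "b = a \<or> f a = g b"
      using fab unfolding g_def by (cases "b = a") simp_all
    moreover have "f = g(a := f a)"
      unfolding g_def by simp
    ultimately show "f \<in> (\<lambda>(c, g). g(a := c)) `
        {(c, g) \<in> {..<d} \<times> invariant_colourings d S q. b = a \<or> c = g b}"
      by (intro image_eqI[where x = "(f a, g)"]) auto
  next
    fix f assume "f \<in> (\<lambda>(c, g). g(a := c)) `
      {(c, g) \<in> {..<d} \<times> invariant_colourings d S q. b = a \<or> c = g b}"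
    then obtain g c where g: "g \<in> invariant_colourings d S q" "c < d" "b = a \<or> c = g b"
      and f: "f = g(a := c)" by auto
    have fab: "f a = f b"
      using g(3) assms(1) unfolding f by auto
    show "f \<in> invariant_colourings d (insert a S) ?\<mu>"
      unfolding invariant_colourings_def
    proof (intro CollectI conjI ballI)
      show "f \<in> PiE (insert a S) (\<lambda>_. {..<d})"
        using g assms(1) unfolding f invariant_colourings_def by (auto simp: PiE_def extensional_def)
      fix k assume "k \<in> insert a S"
      then have "f (q k) = f k"
        using g(1) qa qS assms(1) unfolding f invariant_colourings_def by auto
      then show "f (?\<mu> k) = f k"
        using swap[OF fab] by simp
    qed
  qed
qed

lemma card_invariant_colourings_insert_fibre:
  assumes "a \<notin> S" "q permutes S" "b \<in> insert a S" "c < d"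
  shows "card {f \<in> invariant_colourings d (insert a S) (Transposition.transpose a b \<circ> q). f a = c}
    = card {g \<in> invariant_colourings d S q. b = a \<or> g b = c}"
proof -
  let ?F = "invariant_colourings d S q"
  let ?P = "{(c', g) \<in> {..<d} \<times> ?F. (b = a \<or> c' = g b) \<and> c' = c}"
  have "{f \<in> invariant_colourings d (insert a S) (Transposition.transpose a b \<circ> q). f a = c}
      = (\<lambda>(c, g). g(a := c)) ` ?P"
    unfolding invariant_colourings_insert[OF assms(1-3)] by auto
  also have "card \<dots> = card ?P"
    by (rule card_image, rule inj_on_subset[OF inj_combinator[OF assms(1), of "\<lambda>_. {..<d}"]])
      (auto simp: invariant_colourings_def)
  also have "?P = (\<lambda>g. (c, g)) ` {g \<in> ?F. b = a \<or> g b = c}"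
    using assms(4) by auto
  also have "card \<dots> = card {g \<in> ?F. b = a \<or> g b = c}"
    by (rule card_image) (auto simp: inj_on_def)
  finally show ?thesis .
qed

lemma card_invariant_colourings_eq_sum_fibres:
  assumes "finite T" "a \<in> T"
  shows "card (invariant_colourings d T \<mu>) = (\<Sum>c<d. card {f \<in> invariant_colourings d T \<mu>. f a = c})"
proof -
  have "card (invariant_colourings d T \<mu>) = card (\<Union>c<d. {f \<in> invariant_colourings d T \<mu>. f a = c})"
    using assms(2) by (intro arg_cong[where f = card]) (auto simp: invariant_colourings_def)
  also have "\<dots> = (\<Sum>c<d. card {f \<in> invariant_colourings d T \<mu>. f a = c})"
    using assms(1) by (intro card_UN_disjoint) auto
  finally show ?thesis .
qed

text \<open>Swapping two colours is a bijection between the fibres over them.\<close>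

lemma card_invariant_colourings_fibres_eq:
  assumes "b \<in> S" "q permutes S" "c < d" "c' < d"
  shows "card {g \<in> invariant_colourings d S q. g b = c} = card {g \<in> invariant_colourings d S q. g b = c'}"
proof (rule bij_betw_same_card)
  let ?\<phi> = "\<lambda>g. restrict (Transposition.transpose c c' \<circ> g) S"
  have maps: "?\<phi> g \<in> {g \<in> invariant_colourings d S q. g b = Transposition.transpose c c' e}"
    if "g \<in> invariant_colourings d S q" "g b = e" for g e
  proof -
    have "?\<phi> g \<in> PiE S (\<lambda>_. {..<d})"
      using that(1) assms(3,4) by (auto simp: invariant_colourings_def Transposition.transpose_def)
    moreover have "\<forall>k\<in>S. ?\<phi> g (q k) = ?\<phi> g k"
      using that(1) permutes_in_image[OF assms(2)] by (auto simp: invariant_colourings_def)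
    ultimately show ?thesis
      using that(2) assms(1) by (simp add: invariant_colourings_def)
  qed
  show "bij_betw ?\<phi> {g \<in> invariant_colourings d S q. g b = c} {g \<in> invariant_colourings d S q. g b = c'}"
  proof (rule bij_betw_byWitness[where f' = ?\<phi>])
    show "\<forall>g\<in>{g \<in> invariant_colourings d S q. g b = c}. ?\<phi> (?\<phi> g) = g"
      "\<forall>g\<in>{g \<in> invariant_colourings d S q. g b = c'}. ?\<phi> (?\<phi> g) = g"
      by (auto simp: invariant_colourings_def PiE_def extensional_def fun_eq_iff)
    show "?\<phi> ` {g \<in> invariant_colourings d S q. g b = c} \<subseteq> {g \<in> invariant_colourings d S q. g b = c'}"
      "?\<phi> ` {g \<in> invariant_colourings d S q. g b = c'} \<subseteq> {g \<in> invariant_colourings d S q. g b = c}"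
      using maps[of _ c] maps[of _ c'] by auto
  qed
qed

lemma card_invariant_colourings_fibre:
  assumes "finite S" "b \<in> S" "q permutes S" "c < d"
  shows "real (card {g \<in> invariant_colourings d S q. g b = c})
    = real (card (invariant_colourings d S q)) / real d"
proof -
  have "card (invariant_colourings d S q) = d * card {g \<in> invariant_colourings d S q. g b = c}"
    using card_invariant_colourings_eq_sum_fibres[OF assms(1,2)]
      card_invariant_colourings_fibres_eq[OF assms(2,3) _ assms(4)] by simp
  then show ?thesis
    using assms(4) by simp
qed

lemma card_invariant_colourings_insert:
  assumes "finite S" "a \<notin> S" "q permutes S" "b \<in> insert a S"
  shows "card (invariant_colourings d (insert a S) (Transposition.transpose a b \<circ> q))
    = (if b = a then d else 1) * card (invariant_colourings d S q)"
proof -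
  have "card (invariant_colourings d (insert a S) (Transposition.transpose a b \<circ> q))
      = (\<Sum>c<d. card {f \<in> invariant_colourings d (insert a S) (Transposition.transpose a b \<circ> q). f a = c})"
    using assms(1) by (intro card_invariant_colourings_eq_sum_fibres) auto
  also have "\<dots> = (\<Sum>c<d. card {g \<in> invariant_colourings d S q. b = a \<or> g b = c})"
    using card_invariant_colourings_insert_fibre[OF assms(2-4)] by (intro sum.cong) auto
  also have "\<dots> = (if b = a then d else 1) * card (invariant_colourings d S q)"
    using card_invariant_colourings_eq_sum_fibres[OF assms(1), of b d q] assms(4) by auto
  finally show ?thesis .
qed

lemma sum_card_invariant_colourings:
  assumes "finite S"
  shows "(\<Sum>\<mu>\<in>{\<mu>. \<mu> permutes S}. card (invariant_colourings d S \<mu>)) = pochhammer d (card S)"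
  using assms
proof (induction S rule: finite_induct)
  case empty
  then show ?case by (simp add: invariant_colourings_def)
next
  case (insert a S)
  have weights: "(\<Sum>b\<in>insert a S. if b = a then d else 1) = d + card S"
  proof -
    have "(\<Sum>b\<in>S. if b = a then d else 1) = (\<Sum>b\<in>S. 1)"
      using insert.hyps(2) by (intro sum.cong) auto
    then show ?thesis
      using insert.hyps by simp
  qed
  have "(\<Sum>\<mu>\<in>{\<mu>. \<mu> permutes insert a S}. card (invariant_colourings d (insert a S) \<mu>))
      = (\<Sum>b\<in>insert a S. \<Sum>q\<in>{q. q permutes S}.
          (if b = a then d else 1) * card (invariant_colourings d S q))"
    unfolding sum_over_permutations_insert[OF insert.hyps]
    using insert.hyps by (intro sum.cong refl) (simp add: card_invariant_colourings_insert)
  also have "\<dots> = (\<Sum>b\<in>insert a S. if b = a then d else 1) * pochhammer d (card S)"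
    by (simp add: sum_distrib_left[symmetric] sum_distrib_right insert.IH)
  also have "\<dots> = pochhammer d (card (insert a S))"
    using insert.hyps unfolding weights by (simp add: pochhammer_Suc ac_simps)
  finally show ?case .
qed

lemma sum_weighted_invariant_colourings:
  fixes w :: "'a \<Rightarrow> real"
  assumes "finite T" "a \<in> T" "c < d"
  shows "(\<Sum>\<mu>\<in>{\<mu>. \<mu> permutes T}. w (\<mu> a) * real (card {f \<in> invariant_colourings d T \<mu>. f a = c}))
    = ((real d - 1) * w a + sum w T) / real d * pochhammer (real d) (card T - 1)"
proof -
  define S where "S = T - {a}"
  have S: "T = insert a S" "a \<notin> S" "finite S" "card S = card T - 1"
    using assms by (auto simp: S_def)
  define \<kappa> where "\<kappa> b = (if b = a then 1 else 1 / real d)" for b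
  have fibre: "real (card {f \<in> invariant_colourings d T (Transposition.transpose a b \<circ> q). f a = c})
      = \<kappa> b * real (card (invariant_colourings d S q))" if "b \<in> T" "q permutes S" for b q
    using that card_invariant_colourings_insert_fibre[OF S(2) that(2) _ assms(3), of b]
      card_invariant_colourings_fibre[OF S(3) _ that(2) assms(3), of b] assms(3)
    unfolding S(1) \<kappa>_def by auto
  have "(\<Sum>\<mu>\<in>{\<mu>. \<mu> permutes T}. w (\<mu> a) * real (card {f \<in> invariant_colourings d T \<mu>. f a = c}))
      = (\<Sum>b\<in>T. \<Sum>q\<in>{q. q permutes S}. w b * \<kappa> b * real (card (invariant_colourings d S q)))"
    unfolding S(1) sum_over_permutations_insert[OF S(3,2)]
  proof (intro sum.cong refl)
    fix b q assume b: "b \<in> insert a S" and q: "q \<in> {q. q permutes S}"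
    then have "(Transposition.transpose a b \<circ> q) a = b"
      using permutes_not_in[OF _ S(2), of q] by simp
    then show "w ((Transposition.transpose a b \<circ> q) a) *
        real (card {f \<in> invariant_colourings d (insert a S) (Transposition.transpose a b \<circ> q). f a = c})
      = w b * \<kappa> b * real (card (invariant_colourings d S q))"
      using fibre[of b q] b q unfolding S(1) by simp
  qed
  also have "\<dots> = (\<Sum>b\<in>T. w b * \<kappa> b) * (\<Sum>q\<in>{q. q permutes S}. real (card (invariant_colourings d S q)))"
    by (simp only: sum_product mult.assoc)
  also have "(\<Sum>b\<in>T. w b * \<kappa> b) = ((real d - 1) * w a + sum w T) / real d"
  proof -
    have "(\<Sum>b\<in>S. w b * \<kappa> b) = sum w S / real d"
      using S(2) by (auto simp: \<kappa>_def sum_divide_distrib intro!: sum.cong)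
    then show ?thesis
      using assms(3) S(1-3) by (simp add: \<kappa>_def field_simps)
  qed
  also have "(\<Sum>q\<in>{q. q permutes S}. real (card (invariant_colourings d S q)))
      = pochhammer (real d) (card T - 1)"
    using sum_card_invariant_colourings[OF S(3), of d] S(4) by (metis of_nat_sum pochhammer_of_nat)
  finally show ?thesis .
qed

definition perm_tail :: "(nat \<Rightarrow> nat) \<Rightarrow> nat list \<Rightarrow> nat \<Rightarrow> nat list" where
  "perm_tail \<sigma> x n = map (\<lambda>k. x ! \<sigma> (Suc k)) [0..<n]"

lemma perm_op_Cons:
  assumes "length w = n"
  shows "perm_op (Suc n) \<sigma> x (i # w) = (if x ! (\<sigma> 0) = i \<and> w = perm_tail \<sigma> x n then 1 else 0)"
proof -
  have "(\<forall>j<Suc n. x ! (\<sigma> j) = (i # w) ! j) \<longleftrightarrow> (x ! (\<sigma> 0) = i \<and> w = perm_tail \<sigma> x n)"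
    unfolding All_less_Suc2 using assms
    by (auto simp: perm_tail_def list_eq_iff_nth_eq)
  then show ?thesis unfolding perm_op_def by simp
qed

lemma perm_tail_in_idx:
  assumes "\<sigma> permutes {..<Suc n}" "x \<in> idx d (Suc n)"
  shows "perm_tail \<sigma> x n \<in> idx d n"
proof -
  have "\<sigma> (Suc k) < Suc n" if "k < n" for k
    using permutes_in_image[OF assms(1)] that by simp
  then show ?thesis
    using nth_idx_less[OF assms(2)] by (auto simp: idx_def perm_tail_def)
qed

lemma sum_perm_op_Cons:
  assumes "\<sigma> permutes {..<Suc n}" "x \<in> idx d (Suc n)"
  shows "(\<Sum>w\<in>idx d n. perm_op (Suc n) \<sigma> x (i # w) * F w) =
         (if x ! (\<sigma> 0) = i then F (perm_tail \<sigma> x n) else 0)"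
proof -
  have "(\<Sum>w\<in>idx d n. perm_op (Suc n) \<sigma> x (i # w) * F w) =
        (\<Sum>w\<in>idx d n. if w = perm_tail \<sigma> x n then (if x ! (\<sigma> 0) = i then F w else 0) else 0)"
    by (rule sum.cong) (auto simp: perm_op_Cons idx_def)
  also have "\<dots> = (if x ! (\<sigma> 0) = i then F (perm_tail \<sigma> x n) else 0)"
    using perm_tail_in_idx[OF assms] by (simp add: sum.delta')
  finally show ?thesis .
qed

definition tails_match ::
    "nat \<Rightarrow> nat list \<Rightarrow> nat list \<Rightarrow> nat \<Rightarrow> nat \<Rightarrow> (nat \<Rightarrow> nat) \<Rightarrow> (nat \<Rightarrow> nat) \<Rightarrow> bool" where
  "tails_match n x y i j \<sigma> \<tau> \<longleftrightarrow>
    x ! (\<sigma> 0) = i \<and> y ! (\<tau> 0) = j \<and> (\<forall>k<n. x ! \<sigma> (Suc k) = y ! \<tau> (Suc k))"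

lemma sum_perm_op_Cons_mult:
  assumes "\<sigma> permutes {..<Suc n}" "x \<in> idx d (Suc n)"
  shows "(\<Sum>w\<in>idx d n. perm_op (Suc n) \<sigma> x (i # w) * perm_op (Suc n) \<tau> y (j # w)) =
         (if tails_match n x y i j \<sigma> \<tau> then 1 else 0)"
  unfolding sum_perm_op_Cons[OF assms]
  by (auto simp: perm_op_Cons perm_tail_def tails_match_def list_eq_iff_nth_eq)


section \<open>Positivity under congruence\<close>

lemma sum_commute_outer3:
  "(\<Sum>a\<in>A. \<Sum>b\<in>B. \<Sum>c\<in>C. \<Sum>e\<in>E. f a b c e) = (\<Sum>b\<in>B. \<Sum>c\<in>C. \<Sum>e\<in>E. \<Sum>a\<in>A. (f a b c e :: complex))"
proof -
  have "(\<Sum>a\<in>A. \<Sum>b\<in>B. \<Sum>c\<in>C. \<Sum>e\<in>E. f a b c e) = (\<Sum>b\<in>B. \<Sum>a\<in>A. \<Sum>c\<in>C. \<Sum>e\<in>E. f a b c e)"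
    by (rule sum.swap)
  also have "\<dots> = (\<Sum>b\<in>B. \<Sum>c\<in>C. \<Sum>a\<in>A. \<Sum>e\<in>E. f a b c e)"
    by (intro sum.cong refl) (rule sum.swap)
  also have "\<dots> = (\<Sum>b\<in>B. \<Sum>c\<in>C. \<Sum>e\<in>E. \<Sum>a\<in>A. f a b c e)"
    by (intro sum.cong refl) (rule sum.swap)
  finally show ?thesis .
qed

lemma quadratic_form_congruence:
  fixes X :: "'u \<Rightarrow> 'u \<Rightarrow> complex" and L :: "'w \<Rightarrow> 'u \<Rightarrow> 'p \<Rightarrow> complex"
  shows "(\<Sum>p\<in>S. \<Sum>p'\<in>S. cnj (v p) * (\<Sum>w\<in>W. \<Sum>u\<in>K. \<Sum>u'\<in>K. cnj (L w u p) * X u u' * L w u' p') * v p') =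
    (\<Sum>w\<in>W. \<Sum>u\<in>K. \<Sum>u'\<in>K. cnj (\<Sum>p\<in>S. L w u p * v p) * X u u' * (\<Sum>p'\<in>S. L w u' p' * v p'))"
proof -
  have "(\<Sum>p\<in>S. \<Sum>p'\<in>S. cnj (v p) * (\<Sum>w\<in>W. \<Sum>u\<in>K. \<Sum>u'\<in>K. cnj (L w u p) * X u u' * L w u' p') * v p') =
    (\<Sum>p\<in>S. \<Sum>p'\<in>S. \<Sum>w\<in>W. \<Sum>u\<in>K. \<Sum>u'\<in>K. cnj (v p) * cnj (L w u p) * X u u' * L w u' p' * v p')"
    by (simp only: sum_distrib_left sum_distrib_right mult.assoc)
  also have "\<dots> = (\<Sum>p\<in>S. \<Sum>w\<in>W. \<Sum>u\<in>K. \<Sum>u'\<in>K. \<Sum>p'\<in>S. cnj (v p) * cnj (L w u p) * X u u' * L w u' p' * v p')"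
    by (intro sum.cong refl) (rule sum_commute_outer3)
  also have "\<dots> = (\<Sum>w\<in>W. \<Sum>u\<in>K. \<Sum>u'\<in>K. \<Sum>p\<in>S. \<Sum>p'\<in>S. cnj (v p) * cnj (L w u p) * X u u' * L w u' p' * v p')"
    by (rule sum_commute_outer3)
  also have "\<dots> = (\<Sum>w\<in>W. \<Sum>u\<in>K. \<Sum>u'\<in>K. cnj (\<Sum>p\<in>S. L w u p * v p) * X u u' * (\<Sum>p'\<in>S. L w u' p' * v p'))"
  proof (intro sum.cong refl)
    fix w u u'
    have "cnj (\<Sum>p\<in>S. L w u p * v p) * X u u' * (\<Sum>p'\<in>S. L w u' p' * v p') =
      (\<Sum>p'\<in>S. \<Sum>p\<in>S. (cnj (L w u p) * cnj (v p)) * X u u' * (L w u' p' * v p'))"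
      by (simp only: cnj_sum complex_cnj_mult sum_distrib_left sum_distrib_right)
    also have "\<dots> = (\<Sum>p\<in>S. \<Sum>p'\<in>S. (cnj (L w u p) * cnj (v p)) * X u u' * (L w u' p' * v p'))"
      by (rule sum.swap)
    also have "\<dots> = (\<Sum>p\<in>S. \<Sum>p'\<in>S. cnj (v p) * cnj (L w u p) * X u u' * L w u' p' * v p')"
      by (intro sum.cong refl) (simp only: mult_ac)
    finally show "(\<Sum>p\<in>S. \<Sum>p'\<in>S. cnj (v p) * cnj (L w u p) * X u u' * L w u' p' * v p') =
      cnj (\<Sum>p\<in>S. L w u p * v p) * X u u' * (\<Sum>p'\<in>S. L w u' p' * v p')" by simp
  qed
  finally show ?thesis .
qed

lemma cnj_congruence_form:
  fixes X :: "'u \<Rightarrow> 'u \<Rightarrow> complex" and L :: "'w \<Rightarrow> 'u \<Rightarrow> 'p \<Rightarrow> complex"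
  assumes "\<forall>x\<in>K. \<forall>y\<in>K. X y x = cnj (X x y)"
  shows "cnj (\<Sum>w\<in>W. \<Sum>u\<in>K. \<Sum>u'\<in>K. cnj (L w u p) * X u u' * L w u' p')
    = (\<Sum>w\<in>W. \<Sum>u\<in>K. \<Sum>u'\<in>K. cnj (L w u p') * X u u' * L w u' p)"
proof -
  have "cnj (\<Sum>w\<in>W. \<Sum>u\<in>K. \<Sum>u'\<in>K. cnj (L w u p) * X u u' * L w u' p')
      = (\<Sum>w\<in>W. \<Sum>u\<in>K. \<Sum>u'\<in>K. cnj (L w u' p') * X u' u * L w u p)"
  proof (simp only: cnj_sum, intro sum.cong refl)
    fix w u u' assume "u \<in> K" "u' \<in> K"
    then have "X u' u = cnj (X u u')"
      using assms by blast
    then show "cnj (cnj (L w u p) * X u u' * L w u' p') = cnj (L w u' p') * X u' u * L w u p"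
      by (simp add: mult_ac)
  qed
  also have "\<dots> = (\<Sum>w\<in>W. \<Sum>u\<in>K. \<Sum>u'\<in>K. cnj (L w u p') * X u u' * L w u' p)"
    by (rule sum.cong[OF refl], rule sum.swap)
  finally show ?thesis .
qed

lemma psd_congruence:
  fixes M :: "'p \<Rightarrow> 'p \<Rightarrow> complex" and X :: "'u \<Rightarrow> 'u \<Rightarrow> complex"
    and L :: "'w \<Rightarrow> 'u \<Rightarrow> 'p \<Rightarrow> complex"
  assumes X: "psd K X" and r: "r \<ge> 0"
    and M: "\<forall>p\<in>S. \<forall>p'\<in>S. M p p'
      = complex_of_real r * (\<Sum>w\<in>W. \<Sum>u\<in>K. \<Sum>u'\<in>K. cnj (L w u p) * X u u' * L w u' p')"
  shows "psd S M"
  unfolding psd_def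
proof (intro conjI allI ballI)
  have hermitian: "\<forall>x\<in>K. \<forall>y\<in>K. X y x = cnj (X x y)"
    using X unfolding psd_def by blast
  fix p p' assume "p \<in> S" "p' \<in> S"
  then have "M p p' = complex_of_real r * (\<Sum>w\<in>W. \<Sum>u\<in>K. \<Sum>u'\<in>K. cnj (L w u p) * X u u' * L w u' p')"
    "M p' p = complex_of_real r * (\<Sum>w\<in>W. \<Sum>u\<in>K. \<Sum>u'\<in>K. cnj (L w u p') * X u u' * L w u' p)"
    using M by blast+
  then show "M p' p = cnj (M p p')"
    by (simp only: complex_cnj_mult complex_cnj_complex_of_real cnj_congruence_form[OF hermitian])
next
  fix v :: "'p \<Rightarrow> complex"
  have X_form: "Im (\<Sum>x\<in>K. \<Sum>y\<in>K. cnj (u x) * X x y * u y) = 0"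
    "Re (\<Sum>x\<in>K. \<Sum>y\<in>K. cnj (u x) * X x y * u y) \<ge> 0" for u
    using X unfolding psd_def Let_def by blast+
  define U where "U w u = (\<Sum>p\<in>S. L w u p * v p)" for w u
  let ?Q = "\<Sum>w\<in>W. \<Sum>u\<in>K. \<Sum>u'\<in>K. cnj (U w u) * X u u' * U w u'"
  have "(\<Sum>x\<in>S. \<Sum>y\<in>S. cnj (v x) * M x y * v y) = (\<Sum>x\<in>S. \<Sum>y\<in>S. cnj (v x) *
      (complex_of_real r * (\<Sum>w\<in>W. \<Sum>u\<in>K. \<Sum>u'\<in>K. cnj (L w u x) * X u u' * L w u' y)) * v y)"
    using M by (intro sum.cong refl) simp
  also have "\<dots> = complex_of_real r * (\<Sum>x\<in>S. \<Sum>y\<in>S.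
      cnj (v x) * (\<Sum>w\<in>W. \<Sum>u\<in>K. \<Sum>u'\<in>K. cnj (L w u x) * X u u' * L w u' y) * v y)"
    by (simp only: sum_distrib_left mult_ac)
  also have "\<dots> = complex_of_real r * ?Q"
    unfolding quadratic_form_congruence U_def ..
  finally have q: "(\<Sum>x\<in>S. \<Sum>y\<in>S. cnj (v x) * M x y * v y) = complex_of_real r * ?Q" .
  have "Im ?Q = 0" "Re ?Q \<ge> 0"
    using X_form by (simp_all add: Im_sum Re_sum sum_nonneg)
  then show "let q = (\<Sum>x\<in>S. \<Sum>y\<in>S. cnj (v x) * M x y * v y) in Im q = 0 \<and> Re q \<ge> 0"
    unfolding q Let_def using r by simp
qed


section \<open>Kraus form of the map\<close>

definition kraus_kernel :: "nat \<Rightarrow> nat \<Rightarrow> (nat \<Rightarrow> real) \<Rightarrow> nat list \<Rightarrow> nat list \<Rightarrow> nat \<Rightarrow> nat \<Rightarrow> complex" where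
  "kraus_kernel d n \<beta> x y i j = (\<Sum>w\<in>idx d n. P_beta (Suc n) \<beta> x (i # w) * P_beta (Suc n) \<beta> y (j # w))"

definition T_const :: "nat \<Rightarrow> nat \<Rightarrow> real" where
  "T_const d N = real d * real N * real (N + d - 1) / real ((N + d - 1) choose N)"

lemma T_beta_kraus:
  "T_beta d (Suc n) \<beta> \<rho> x y
    = complex_of_real (T_const d (Suc n)) * (\<Sum>c<d. \<Sum>e<d. \<rho> c e * kraus_kernel d n \<beta> x y c e)"
proof -
  let ?P = "P_beta (Suc n) \<beta>"
  have tensor_id: "(\<Sum>u\<in>idx d (Suc n). ?P x u * tensor_id \<rho> u (e # w)) = (\<Sum>c<d. ?P x (c # w) * \<rho> c e)"
    if "w \<in> idx d n" for e w
  proof -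
    have "(\<Sum>u\<in>idx d (Suc n). ?P x u * tensor_id \<rho> u (e # w))
        = (\<Sum>c<d. \<Sum>w'\<in>idx d n. if w' = w then ?P x (c # w) * \<rho> c e else 0)"
      unfolding sum_idx_Suc tensor_id_def by (intro sum.cong) auto
    then show ?thesis
      using that by simp
  qed
  have "op_mult d (Suc n) (op_mult d (Suc n) ?P (tensor_id \<rho>)) (op_transpose ?P) x y
      = (\<Sum>e<d. \<Sum>w\<in>idx d n. (\<Sum>c<d. ?P x (c # w) * \<rho> c e) * ?P y (e # w))"
    unfolding op_mult_def op_transpose_def sum_idx_Suc[where f = "\<lambda>v. _ v * ?P y v"]
    using tensor_id by simp
  also have "\<dots> = (\<Sum>e<d. \<Sum>c<d. \<Sum>w\<in>idx d n. \<rho> c e * (?P x (c # w) * ?P y (e # w)))"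
    unfolding sum_distrib_right
    by (intro sum.cong refl, subst sum.swap) (simp add: mult_ac)
  also have "\<dots> = (\<Sum>c<d. \<Sum>e<d. \<rho> c e * kraus_kernel d n \<beta> x y c e)"
    unfolding kraus_kernel_def sum_distrib_left by (rule sum.swap)
  finally show ?thesis
    unfolding T_beta_def T_const_def by simp
qed

lemma T_beta_linear:
  "T_beta d (Suc n) \<beta> (\<lambda>i j. a * X i j + b * Y i j) x y
    = a * T_beta d (Suc n) \<beta> X x y + b * T_beta d (Suc n) \<beta> Y x y"
  unfolding T_beta_kraus
  by (simp add: distrib_left distrib_right sum.distrib sum_distrib_left mult_ac)

lemma cnj_P_beta: "cnj (P_beta N \<beta> x z) = P_beta N \<beta> x z"
proof -
  have "cnj (perm_op N \<sigma> x z) = perm_op N \<sigma> x z" for \<sigma>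
    unfolding perm_op_def by simp
  then show ?thesis
    unfolding P_beta_def by (simp add: cnj_sum)
qed

lemma sum_block_delta:
  fixes b k d :: nat
  assumes "b < k"
  shows "(\<Sum>u\<in>{..<k} \<times> {..<d}. (if fst u = b then G (snd u) else 0)) = (\<Sum>e<d. (G e :: complex))"
proof -
  have "(\<Sum>u\<in>{..<k} \<times> {..<d}. (if fst u = b then G (snd u) else 0)) =
      (\<Sum>b'<k. \<Sum>e<d. if b' = b then G e else 0)"
    by (simp add: sum.cartesian_product split_def)
  also have "\<dots> = (\<Sum>b'<k. if b' = b then (\<Sum>e<d. G e) else 0)"
    by (intro sum.cong refl) simp
  also have "\<dots> = (\<Sum>e<d. G e)" using assms by (subst sum.delta) simp_all
  finally show ?thesis .
qed

lemma sum_sum_block_delta: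
  fixes a b k d :: nat
  assumes a: "a < k" and b: "b < k"
  shows "(\<Sum>u\<in>{..<k} \<times> {..<d}. \<Sum>u'\<in>{..<k} \<times> {..<d}.
      cnj (if fst u = a then f (snd u) else 0) * X u u' * (if fst u' = b then g (snd u') else 0))
    = (\<Sum>c<d. \<Sum>e<d. cnj (f c) * X (a, c) (b, e) * (g e :: complex))"
proof -
  have "(\<Sum>u'\<in>{..<k} \<times> {..<d}.
        cnj (if fst u = a then f (snd u) else 0) * X u u' * (if fst u' = b then g (snd u') else 0))
      = (if fst u = a then (\<Sum>e<d. cnj (f (snd u)) * X (a, snd u) (b, e) * g e) else 0)" for u
  proof -
    have "(\<Sum>u'\<in>{..<k} \<times> {..<d}.
          cnj (if fst u = a then f (snd u) else 0) * X u u' * (if fst u' = b then g (snd u') else 0))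
        = (\<Sum>u'\<in>{..<k} \<times> {..<d}. if fst u' = b then
            (if fst u = a then cnj (f (snd u)) * X (a, snd u) (b, snd u') * g (snd u') else 0) else 0)"
      by (intro sum.cong refl) (auto simp: prod_eq_iff)
    also have "\<dots> = (\<Sum>e<d. if fst u = a then cnj (f (snd u)) * X (a, snd u) (b, e) * g e else 0)"
      by (rule sum_block_delta[OF b])
    also have "\<dots> = (if fst u = a then (\<Sum>e<d. cnj (f (snd u)) * X (a, snd u) (b, e) * g e) else 0)"
      by simp
    finally show ?thesis .
  qed
  then have "(\<Sum>u\<in>{..<k} \<times> {..<d}. \<Sum>u'\<in>{..<k} \<times> {..<d}.
        cnj (if fst u = a then f (snd u) else 0) * X u u' * (if fst u' = b then g (snd u') else 0))
      = (\<Sum>u\<in>{..<k} \<times> {..<d}.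
          if fst u = a then (\<Sum>e<d. cnj (f (snd u)) * X (a, snd u) (b, e) * g e) else 0)"
    by simp
  also have "\<dots> = (\<Sum>c<d. \<Sum>e<d. cnj (f c) * X (a, c) (b, e) * g e)"
    by (rule sum_block_delta[OF a])
  finally show ?thesis .
qed

text \<open>The Kraus operators of \<open>id\<^sub>k \<otimes> T\<^sub>\<beta>\<close>: \<open>\<langle>(a, x)| K\<^sub>w |(b, c)\<rangle> = \<delta>\<^sub>a\<^sub>b \<langle>x|P|c w\<rangle>\<close>.\<close>

definition block_kraus :: "nat \<Rightarrow> (nat \<Rightarrow> real) \<Rightarrow> nat list \<Rightarrow> nat \<times> nat \<Rightarrow> nat \<times> nat list \<Rightarrow> complex" where
  "block_kraus n \<beta> w u p = (if fst u = fst p then P_beta (Suc n) \<beta> (snd p) (snd u # w) else 0)"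

lemma T_beta_block_kraus:
  assumes "a < k" "b < k"
  shows "T_beta d (Suc n) \<beta> (\<lambda>i j. X (a, i) (b, j)) x y = complex_of_real (T_const d (Suc n)) *
    (\<Sum>w\<in>idx d n. \<Sum>u\<in>{..<k} \<times> {..<d}. \<Sum>u'\<in>{..<k} \<times> {..<d}.
      cnj (block_kraus n \<beta> w u (a, x)) * X u u' * block_kraus n \<beta> w u' (b, y))"
proof -
  let ?P = "P_beta (Suc n) \<beta>"
  have "(\<Sum>w\<in>idx d n. \<Sum>u\<in>{..<k} \<times> {..<d}. \<Sum>u'\<in>{..<k} \<times> {..<d}.
        cnj (block_kraus n \<beta> w u (a, x)) * X u u' * block_kraus n \<beta> w u' (b, y))
      = (\<Sum>w\<in>idx d n. \<Sum>c<d. \<Sum>e<d. ?P x (c # w) * X (a, c) (b, e) * ?P y (e # w))"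
    unfolding block_kraus_def fst_conv snd_conv
  proof (intro sum.cong refl)
    fix w
    show "(\<Sum>u\<in>{..<k} \<times> {..<d}. \<Sum>u'\<in>{..<k} \<times> {..<d}. cnj (if fst u = a then ?P x (snd u # w) else 0)
        * X u u' * (if fst u' = b then ?P y (snd u' # w) else 0))
      = (\<Sum>c<d. \<Sum>e<d. ?P x (c # w) * X (a, c) (b, e) * ?P y (e # w))"
      using sum_sum_block_delta[OF assms, where f = "\<lambda>c. ?P x (c # w)" and g = "\<lambda>e. ?P y (e # w)"
          and X = X and d = d]
      by (simp only: cnj_P_beta)
  qed
  also have "\<dots> = (\<Sum>c<d. \<Sum>w\<in>idx d n. \<Sum>e<d. ?P x (c # w) * X (a, c) (b, e) * ?P y (e # w))"
    by (rule sum.swap)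
  also have "\<dots> = (\<Sum>c<d. \<Sum>e<d. \<Sum>w\<in>idx d n. ?P x (c # w) * X (a, c) (b, e) * ?P y (e # w))"
    by (intro sum.cong refl) (rule sum.swap)
  also have "\<dots> = (\<Sum>c<d. \<Sum>e<d. X (a, c) (b, e) * kraus_kernel d n \<beta> x y c e)"
    unfolding kraus_kernel_def sum_distrib_left by (intro sum.cong refl) (simp only: mult_ac)
  finally show ?thesis
    unfolding T_beta_kraus by simp
qed

lemma T_beta_completely_positive:
  fixes X :: "nat \<times> nat \<Rightarrow> nat \<times> nat \<Rightarrow> complex"
  assumes "psd ({..<k} \<times> {..<d}) X"
  shows "psd ({..<k} \<times> idx d (Suc n)) (\<lambda>(a, x) (b, y). T_beta d (Suc n) \<beta> (\<lambda>i j. X (a, i) (b, j)) x y)"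
  by (rule psd_congruence[OF assms, where r = "T_const d (Suc n)" and W = "idx d n"
      and L = "block_kraus n \<beta>"]) (auto simp: T_const_def T_beta_block_kraus)

abbreviation perms :: "nat \<Rightarrow> (nat \<Rightarrow> nat) set" where
  "perms n \<equiv> {\<sigma>. \<sigma> permutes {..<n}}"

definition match_sum :: "nat \<Rightarrow> (nat \<Rightarrow> real) \<Rightarrow> nat list \<Rightarrow> nat list \<Rightarrow> nat \<Rightarrow> nat \<Rightarrow> real" where
  "match_sum n \<beta> x y i j = (\<Sum>\<sigma>\<in>perms (Suc n). \<Sum>\<tau>\<in>perms (Suc n).
      \<beta> (\<sigma> 0 + 1) * \<beta> (\<tau> 0 + 1) * (if tails_match n x y i j \<sigma> \<tau> then 1 else 0))"

lemma kraus_kernel_eq_match_sum: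
  assumes "x \<in> idx d (Suc n)"
  shows "kraus_kernel d n \<beta> x y i j = complex_of_real ((1 / fact (Suc n))^2 * match_sum n \<beta> x y i j)"
proof -
  let ?c = "complex_of_real (1 / fact (Suc n))"
  have "kraus_kernel d n \<beta> x y i j = (\<Sum>w\<in>idx d n. ?c * ?c * (\<Sum>\<sigma>\<in>perms (Suc n). \<Sum>\<tau>\<in>perms (Suc n).
      complex_of_real (\<beta> (\<sigma> 0 + 1) * \<beta> (\<tau> 0 + 1)) *
        (perm_op (Suc n) \<sigma> x (i # w) * perm_op (Suc n) \<tau> y (j # w))))"
    unfolding kraus_kernel_def P_beta_def
    by (rule sum.cong) (simp_all add: sum_product mult_ac)
  also have "\<dots> = ?c * ?c * (\<Sum>\<sigma>\<in>perms (Suc n). \<Sum>\<tau>\<in>perms (Suc n).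
      complex_of_real (\<beta> (\<sigma> 0 + 1) * \<beta> (\<tau> 0 + 1)) *
        (\<Sum>w\<in>idx d n. perm_op (Suc n) \<sigma> x (i # w) * perm_op (Suc n) \<tau> y (j # w)))"
    by (simp add: sum_distrib_left sum.swap[of _ "idx d n"])
  also have "\<dots> = ?c * ?c * (\<Sum>\<sigma>\<in>perms (Suc n). \<Sum>\<tau>\<in>perms (Suc n).
      complex_of_real (\<beta> (\<sigma> 0 + 1) * \<beta> (\<tau> 0 + 1) * (if tails_match n x y i j \<sigma> \<tau> then 1 else 0)))"
    using sum_perm_op_Cons_mult[OF _ assms] by (intro arg_cong2[where f="(*)"] refl sum.cong) auto
  also have "\<dots> = complex_of_real ((1 / fact (Suc n))^2 * match_sum n \<beta> x y i j)"
    by (simp add: match_sum_def power2_eq_square)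
  finally show ?thesis .
qed

section \<open>The Choi matrix\<close>

lemma transpose_0_1_simps [simp]:
  "Transposition.transpose (0::nat) 1 0 = 1"
  "Transposition.transpose (0::nat) 1 (Suc 0) = 0"
  "Transposition.transpose (0::nat) 1 (Suc (Suc k)) = Suc (Suc k)"
  by (simp_all add: Transposition.transpose_def)

definition ptrans_match :: "nat \<Rightarrow> nat list \<Rightarrow> nat list \<Rightarrow> nat \<Rightarrow> nat \<Rightarrow> (nat \<Rightarrow> nat) \<Rightarrow> bool" where
  "ptrans_match N x y i j \<rho> \<longleftrightarrow> (\<forall>l<Suc N. (j # x) ! \<rho> l = (i # y) ! l)"

lemma ptrans0_perm_op_Cons:
  "ptrans0 (perm_op (Suc N) \<rho>) (i # x) (j # y) = (if ptrans_match N x y i j \<rho> then 1 else 0)"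
  unfolding ptrans0_def perm_op_def ptrans_match_def by simp

text \<open>The map \<open>\<tau> \<mapsto> choi_perm \<sigma> \<tau>\<close> is a bijection from the permutations of \<open>{..<N}\<close> onto
  the permutations of \<open>{..N}\<close> sending 0 to \<open>\<sigma> 0 + 1\<close>; under it, contracting the tails of
  \<open>\<Pi>\<^sub>\<sigma>\<close> and \<open>\<Pi>\<^sub>\<tau>\<close> becomes the partial transpose of a single permutation operator.\<close>

definition choi_perm :: "(nat \<Rightarrow> nat) \<Rightarrow> (nat \<Rightarrow> nat) \<Rightarrow> nat \<Rightarrow> nat" where
  "choi_perm \<sigma> \<tau> = lift_perm \<sigma> \<circ> Transposition.transpose 0 1 \<circ> inv (lift_perm \<tau>)"

lemma choi_perm_permutes:
  assumes "\<sigma> permutes {..<Suc n}" "\<tau> permutes {..<Suc n}"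
  shows "choi_perm \<sigma> \<tau> permutes {..Suc n}"
  unfolding choi_perm_def
  by (intro permutes_compose permutes_inv permutes_lift_perm assms permutes_swap_id) auto

lemma choi_perm_0:
  assumes "\<tau> permutes {..<Suc n}"
  shows "choi_perm \<sigma> \<tau> 0 = Suc (\<sigma> 0)"
proof -
  have "inv (lift_perm \<tau>) 0 = 0"
    using permutes_inv_eq[OF permutes_lift_perm[OF assms]] by simp
  then show ?thesis by (simp add: choi_perm_def)
qed

lemma inv_choi_perm_0:
  assumes "\<sigma> permutes {..<Suc n}" "\<tau> permutes {..<Suc n}"
  shows "inv (choi_perm \<sigma> \<tau>) 0 = Suc (\<tau> 0)"
proof -
  have "inv (lift_perm \<tau>) (Suc (\<tau> 0)) = 1"
    using permutes_inv_eq[OF permutes_lift_perm[OF assms(2)]] by simp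
  then have "choi_perm \<sigma> \<tau> (Suc (\<tau> 0)) = 0"
    by (simp add: choi_perm_def)
  then show ?thesis
    using permutes_inv_eq[OF choi_perm_permutes[OF assms]] by simp
qed

lemma inj_on_choi_perm:
  assumes "\<sigma> permutes {..<Suc n}"
  shows "inj_on (choi_perm \<sigma>) (perms (Suc n))"
proof (rule inj_onI)
  fix \<tau>\<^sub>1 \<tau>\<^sub>2 assume \<tau>: "\<tau>\<^sub>1 \<in> perms (Suc n)" "\<tau>\<^sub>2 \<in> perms (Suc n)"
    and eq: "choi_perm \<sigma> \<tau>\<^sub>1 = choi_perm \<sigma> \<tau>\<^sub>2"
  have inj: "inj (lift_perm \<sigma> \<circ> Transposition.transpose 0 1)"
    by (intro inj_compose permutes_inj[OF permutes_lift_perm[OF assms]]) simp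
  have "inv (lift_perm \<tau>\<^sub>1) l = inv (lift_perm \<tau>\<^sub>2) l" for l
  proof (rule injD[OF inj])
    show "(lift_perm \<sigma> \<circ> Transposition.transpose 0 1) (inv (lift_perm \<tau>\<^sub>1) l)
        = (lift_perm \<sigma> \<circ> Transposition.transpose 0 1) (inv (lift_perm \<tau>\<^sub>2) l)"
      using fun_cong[OF eq, of l] by (simp add: choi_perm_def)
  qed
  then have "inv (lift_perm \<tau>\<^sub>1) = inv (lift_perm \<tau>\<^sub>2)" ..
  moreover have "inv (inv (lift_perm \<tau>\<^sub>k)) = lift_perm \<tau>\<^sub>k" if "\<tau>\<^sub>k \<in> perms (Suc n)" for \<tau>\<^sub>k
    using permutes_inv_inv[OF permutes_lift_perm] that by simp
  ultimately have "lift_perm \<tau>\<^sub>1 = lift_perm \<tau>\<^sub>2"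
    using \<tau> by metis
  then show "\<tau>\<^sub>1 = \<tau>\<^sub>2"
    by (rule lift_perm_inj)
qed

lemma choi_perm_image:
  assumes "\<sigma> permutes {..<Suc n}"
  shows "choi_perm \<sigma> ` perms (Suc n) = {\<rho>. \<rho> permutes {..Suc n} \<and> \<rho> 0 = Suc (\<sigma> 0)}"
proof (rule card_subset_eq)
  show "finite {\<rho>. \<rho> permutes {..Suc n} \<and> \<rho> 0 = Suc (\<sigma> 0)}"
    by (rule finite_subset[OF _ finite_permutations[of "{..Suc n}"]]) auto
  show "choi_perm \<sigma> ` perms (Suc n) \<subseteq> {\<rho>. \<rho> permutes {..Suc n} \<and> \<rho> 0 = Suc (\<sigma> 0)}"
    using choi_perm_permutes[OF assms] choi_perm_0 by auto
  have "card (choi_perm \<sigma> ` perms (Suc n)) = fact (Suc n)"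
    using card_image[OF inj_on_choi_perm[OF assms]] card_permutations[of "{..<Suc n}" "Suc n"] by simp
  moreover have "card {\<rho>. \<rho> permutes {..Suc n} \<and> \<rho> 0 = Suc (\<sigma> 0)} = fact (Suc n)"
    using card_permutes_apply[of "{..Suc n}" 0 "Suc (\<sigma> 0)"] permutes_in_image[OF assms, of 0] by simp
  ultimately show "card (choi_perm \<sigma> ` perms (Suc n)) = card {\<rho>. \<rho> permutes {..Suc n} \<and> \<rho> 0 = Suc (\<sigma> 0)}"
    by simp
qed

lemma ptrans_match_choi_perm:
  assumes "\<sigma> permutes {..<Suc n}" "\<tau> permutes {..<Suc n}"
  shows "ptrans_match (Suc n) x y i j (choi_perm \<sigma> \<tau>) \<longleftrightarrow> tails_match n x y i j \<sigma> \<tau>"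
proof -
  have lift: "lift_perm \<tau> permutes {..Suc n}"
    by (rule permutes_lift_perm[OF assms(2)])
  let ?Q = "\<lambda>l. (j # x) ! choi_perm \<sigma> \<tau> l = (i # y) ! l"
  have Q: "?Q (lift_perm \<tau> m)
      \<longleftrightarrow> (j # x) ! lift_perm \<sigma> (Transposition.transpose 0 1 m) = (i # y) ! lift_perm \<tau> m" for m
    by (simp add: choi_perm_def permutes_inverses(2)[OF lift])
  have "ptrans_match (Suc n) x y i j (choi_perm \<sigma> \<tau>) \<longleftrightarrow> (\<forall>l\<in>lift_perm \<tau> ` {..Suc n}. ?Q l)"
    unfolding ptrans_match_def permutes_image[OF lift] by (auto simp: less_Suc_eq_le)
  also have "\<dots> \<longleftrightarrow> (\<forall>m<Suc (Suc n). ?Q (lift_perm \<tau> m))"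
    unfolding Ball_image_comp o_def by (auto simp: less_Suc_eq_le)
  also have "\<dots> \<longleftrightarrow> tails_match n x y i j \<sigma> \<tau>"
    unfolding Q All_less_Suc2 tails_match_def by auto
  finally show ?thesis .
qed

lemma sum_permutes_0_eq_Sigma_ab:
  assumes "a \<noteq> 0"
  shows "(\<Sum>\<rho>\<in>{\<rho>. \<rho> permutes {..N} \<and> \<rho> 0 = a}. g (inv \<rho> 0) \<rho>)
    = (\<Sum>b\<in>{1..N}. \<Sum>\<rho>\<in>Sigma_ab N a b. g b \<rho>)"
proof -
  let ?R = "{\<rho>. \<rho> permutes {..N} \<and> \<rho> 0 = a}"
  have Sigma_ab: "Sigma_ab N a b = {\<rho> \<in> ?R. inv \<rho> 0 = b}" for b
    unfolding Sigma_ab_def by (auto simp: permutes_inv_eq permutes_inverses(1))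
  have "(\<Sum>\<rho>\<in>?R. g (inv \<rho> 0) \<rho>) = (\<Sum>b\<in>{1..N}. \<Sum>\<rho>\<in>{\<rho> \<in> ?R. inv \<rho> 0 = b}. g (inv \<rho> 0) \<rho>)"
  proof (rule sum.group[symmetric])
    show "finite ?R"
      by (rule finite_subset[OF _ finite_permutations[of "{..N}"]]) auto
    show "(\<lambda>\<rho>. inv \<rho> 0) ` ?R \<subseteq> {1..N}"
    proof
      fix b assume "b \<in> (\<lambda>\<rho>. inv \<rho> 0) ` ?R"
      then obtain \<rho> where \<rho>: "\<rho> permutes {..N}" "\<rho> 0 = a" "b = inv \<rho> 0" by auto
      then have "\<rho> b = 0" "b \<in> {..N}"
        using permutes_inverses(1)[OF \<rho>(1)] permutes_in_image[OF permutes_inv[OF \<rho>(1)]] by auto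
      then show "b \<in> {1..N}"
        using \<rho>(2) assms by (cases b) auto
    qed
  qed simp
  also have "\<dots> = (\<Sum>b\<in>{1..N}. \<Sum>\<rho>\<in>Sigma_ab N a b. g b \<rho>)"
    unfolding Sigma_ab by (intro sum.cong refl) auto
  finally show ?thesis .
qed

lemma sum_tails_match_eq_Sigma_ab:
  assumes "\<sigma> permutes {..<Suc n}"
  shows "(\<Sum>\<tau>\<in>perms (Suc n). \<beta> (\<tau> 0 + 1) * (if tails_match n x y i j \<sigma> \<tau> then 1 else 0))
    = (\<Sum>b\<in>{1..Suc n}. \<Sum>\<rho>\<in>Sigma_ab (Suc n) (Suc (\<sigma> 0)) b.
         \<beta> b * (if ptrans_match (Suc n) x y i j \<rho> then 1 else 0))"
proof -
  let ?f = "\<lambda>\<rho>. \<beta> (inv \<rho> 0) * (if ptrans_match (Suc n) x y i j \<rho> then 1 else 0)"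
  have "(\<Sum>\<tau>\<in>perms (Suc n). \<beta> (\<tau> 0 + 1) * (if tails_match n x y i j \<sigma> \<tau> then 1 else 0))
      = (\<Sum>\<tau>\<in>perms (Suc n). ?f (choi_perm \<sigma> \<tau>))"
    using inv_choi_perm_0[OF assms] ptrans_match_choi_perm[OF assms] by (intro sum.cong refl) simp
  also have "\<dots> = (\<Sum>\<rho>\<in>{\<rho>. \<rho> permutes {..Suc n} \<and> \<rho> 0 = Suc (\<sigma> 0)}. ?f \<rho>)"
    using sum.reindex[OF inj_on_choi_perm[OF assms], of ?f] choi_perm_image[OF assms] by simp
  also have "\<dots> = (\<Sum>b\<in>{1..Suc n}. \<Sum>\<rho>\<in>Sigma_ab (Suc n) (Suc (\<sigma> 0)) b.
         \<beta> b * (if ptrans_match (Suc n) x y i j \<rho> then 1 else 0))"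
    by (rule sum_permutes_0_eq_Sigma_ab) simp
  finally show ?thesis .
qed

lemma match_sum_eq_Sigma_ab:
  "match_sum n \<beta> x y i j = fact n * (\<Sum>a\<in>{1..Suc n}. \<Sum>b\<in>{1..Suc n}. \<Sum>\<rho>\<in>Sigma_ab (Suc n) a b.
      \<beta> a * \<beta> b * (if ptrans_match (Suc n) x y i j \<rho> then 1 else 0))"
proof -
  define h where "h a = \<beta> (a + 1) * (\<Sum>b\<in>{1..Suc n}. \<Sum>\<rho>\<in>Sigma_ab (Suc n) (Suc a) b.
      \<beta> b * (if ptrans_match (Suc n) x y i j \<rho> then 1 else 0))" for a
  have "match_sum n \<beta> x y i j = (\<Sum>\<sigma>\<in>perms (Suc n). h (\<sigma> 0))"
    unfolding match_sum_def
  proof (intro sum.cong refl)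
    fix \<sigma> assume "\<sigma> \<in> perms (Suc n)"
    then have "\<sigma> permutes {..<Suc n}" by simp
    have "(\<Sum>\<tau>\<in>perms (Suc n). \<beta> (\<sigma> 0 + 1) * \<beta> (\<tau> 0 + 1) *
        (if tails_match n x y i j \<sigma> \<tau> then 1 else 0))
      = \<beta> (\<sigma> 0 + 1) * (\<Sum>\<tau>\<in>perms (Suc n). \<beta> (\<tau> 0 + 1) *
        (if tails_match n x y i j \<sigma> \<tau> then 1 else 0))"
      by (simp add: sum_distrib_left mult.assoc)
    then show "(\<Sum>\<tau>\<in>perms (Suc n). \<beta> (\<sigma> 0 + 1) * \<beta> (\<tau> 0 + 1) *
        (if tails_match n x y i j \<sigma> \<tau> then 1 else 0)) = h (\<sigma> 0)"
      unfolding h_def sum_tails_match_eq_Sigma_ab[OF \<open>\<sigma> permutes {..<Suc n}\<close>] .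
  qed
  also have "\<dots> = fact n * (\<Sum>a<Suc n. h a)"
    using sum_permutes_apply[of "{..<Suc n}" 0 h] by simp
  also have "(\<Sum>a<Suc n. h a) = (\<Sum>a\<in>{1..Suc n}. \<Sum>b\<in>{1..Suc n}. \<Sum>\<rho>\<in>Sigma_ab (Suc n) a b.
      \<beta> a * \<beta> b * (if ptrans_match (Suc n) x y i j \<rho> then 1 else 0))"
    unfolding h_def One_nat_def sum.atLeast1_atMost_eq
    by (intro sum.cong refl) (simp only: sum_distrib_left mult.assoc Suc_eq_plus1 add_0)
  finally show ?thesis .
qed

lemma sum_sum_unit_mat:
  assumes "i < d" "j < d"
  shows "(\<Sum>a<d. \<Sum>b<d. unit_mat i j a b * F a b) = F i j"
proof -
  have "(\<Sum>b<d. unit_mat i j a b * F a b) = (if a = i then F a j else 0)" for a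
  proof -
    have "unit_mat i j a b * F a b = (if a = i \<and> b = j then F a b else 0)" for b
      by (simp add: unit_mat_def)
    then show ?thesis
      using assms(2) by simp
  qed
  then show ?thesis
    using assms(1) by simp
qed

lemma choi_T_beta:
  assumes "x \<in> idx d (Suc (Suc n))" "y \<in> idx d (Suc (Suc n))"
  shows "choi d (T_beta d (Suc n) \<beta>) x y = C_beta d (Suc n) \<beta> x y"
proof -
  obtain i x' where x: "x = i # x'" "i < d" "x' \<in> idx d (Suc n)"
    using idx_SucE[OF assms(1)] by blast
  obtain j y' where y: "y = j # y'" "j < d" "y' \<in> idx d (Suc n)"
    using idx_SucE[OF assms(2)] by blast
  define S where "S = (\<Sum>a\<in>{1..Suc n}. \<Sum>b\<in>{1..Suc n}. \<Sum>\<rho>\<in>Sigma_ab (Suc n) a b.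
      \<beta> a * \<beta> b * (if ptrans_match (Suc n) x' y' i j \<rho> then 1 else 0))"
  have "choi d (T_beta d (Suc n) \<beta>) x y = T_beta d (Suc n) \<beta> (unit_mat i j) x' y'"
  proof -
    have "unit_mat a b i j = unit_mat i j a b" for a b
      by (auto simp: unit_mat_def)
    then show ?thesis
      unfolding choi_def using x y by (simp add: sum_sum_unit_mat)
  qed
  also have "\<dots> = complex_of_real (T_const d (Suc n)) * kraus_kernel d n \<beta> x' y' i j"
    unfolding T_beta_kraus using x y by (simp add: sum_sum_unit_mat)
  also have "\<dots> = complex_of_real (T_const d (Suc n) * ((1 / fact (Suc n))^2 * (fact n * S)))"
    unfolding kraus_kernel_eq_match_sum[OF x(3)] match_sum_eq_Sigma_ab S_def by simp
  also have "\<dots> = complex_of_real (real d / real ((Suc n + d - 1) choose Suc n)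
      * (real (Suc n + d - 1) / real (Suc n)) * (S / fact n))"
  proof (rule arg_cong[where f = complex_of_real])
    have cancel: "a * p * b / C * ((1 / (p * F))^2 * (F * S)) = a / C * (b / p) * (S / F)"
      if "F > 0" "p > 0" for a p b C F S :: real
      using that by (cases "C = 0") (simp_all add: field_simps power2_eq_square)
    show "T_const d (Suc n) * ((1 / fact (Suc n))^2 * (fact n * S))
      = real d / real ((Suc n + d - 1) choose Suc n) * (real (Suc n + d - 1) / real (Suc n))
        * (S / fact n)"
      unfolding T_const_def fact_Suc by (rule cancel) simp_all
  qed
  also have "\<dots> = C_beta d (Suc n) \<beta> x y"
  proof -
    have inner: "(\<Sum>a\<in>{1..Suc n}. \<Sum>b\<in>{1..Suc n}. \<Sum>\<rho>\<in>Sigma_ab (Suc n) a b.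
        complex_of_real (\<beta> a * \<beta> b / fact (Suc n - 1)) * ptrans0 (perm_op (Suc (Suc n)) \<rho>) x y)
      = complex_of_real (S / fact n)"
      unfolding S_def x y ptrans0_perm_op_Cons sum_divide_distrib of_real_sum
      by (intro sum.cong refl) simp
    have "C_beta d (Suc n) \<beta> x y = complex_of_real (real d / real ((Suc n + d - 1) choose Suc n)
        * (real (Suc n + d - 1) / real (Suc n))) * complex_of_real (S / fact n)"
      unfolding C_beta_def inner ..
    then show ?thesis
      by (simp only: of_real_mult)
  qed
  finally show ?thesis .
qed

section \<open>Trace preservation\<close>

text \<open>Colourings agreeing at all positions \<open>\<sigma> (k + 1)\<close>, \<open>\<tau> (k + 1)\<close> also agree at \<open>\<sigma> 0\<close>,
  \<open>\<tau> 0\<close>, since both permutations read off the same multiset of colours.\<close>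

lemma card_tails_match_diag:
  assumes \<sigma>: "\<sigma> permutes {..<Suc n}" and \<tau>: "\<tau> permutes {..<Suc n}"
  shows "card {x \<in> idx d (Suc n). tails_match n x x c e \<sigma> \<tau>} =
    (if c = e then card {f \<in> invariant_colourings d {..<Suc n} (\<tau> \<circ> inv \<sigma>). f (\<sigma> 0) = c} else 0)"
proof -
  let ?P = "\<lambda>f. f (\<sigma> 0) = c \<and> f (\<tau> 0) = e \<and> (\<forall>k<n. f (\<sigma> (Suc k)) = f (\<tau> (Suc k)))"
  have below: "\<sigma> k < Suc n" "\<tau> k < Suc n" if "k < Suc n" for k
    using permutes_in_image[OF \<sigma>] permutes_in_image[OF \<tau>] that by auto
  have "card {x \<in> idx d (Suc n). tails_match n x x c e \<sigma> \<tau>} = card {x \<in> idx d (Suc n). ?P ((!) x)}"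
    unfolding tails_match_def ..
  also have "\<dots> = card {f \<in> PiE {..<Suc n} (\<lambda>_. {..<d}). ?P f}"
  proof (rule card_filter_idx_eq_PiE)
    fix f g :: "nat \<Rightarrow> nat" assume "\<forall>k<Suc n. f k = g k"
    then have "f (\<sigma> k) = g (\<sigma> k) \<and> f (\<tau> k) = g (\<tau> k)" if "k < Suc n" for k
      using below[OF that] by simp
    then show "?P f = ?P g"
      by (metis Suc_mono zero_less_Suc)
  qed
  also have "{f \<in> PiE {..<Suc n} (\<lambda>_. {..<d}). ?P f}
      = (if c = e then {f \<in> invariant_colourings d {..<Suc n} (\<tau> \<circ> inv \<sigma>). f (\<sigma> 0) = c} else {})"
  proof -
    have "?P f \<longleftrightarrow> c = e \<and> f (\<sigma> 0) = c \<and> (\<forall>m\<in>{..<Suc n}. f ((\<tau> \<circ> inv \<sigma>) m) = f m)" for f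
    proof -
      have "(\<forall>k\<in>{..<Suc n} - {0}. g k) \<longleftrightarrow> (\<forall>k<n. g (Suc k))" for g :: "nat \<Rightarrow> bool"
      proof
        assume "\<forall>k<n. g (Suc k)"
        then show "\<forall>k\<in>{..<Suc n} - {0}. g k"
          by (metis DiffE lessThan_iff less_Suc_eq_0_disj singletonI)
      qed simp
      then have "(\<forall>k<n. f (\<sigma> (Suc k)) = f (\<tau> (Suc k))) \<longleftrightarrow> (\<forall>k<Suc n. f (\<sigma> k) = f (\<tau> k))"
        using permutes_agree_off_point[OF _ \<sigma> \<tau>, where a = 0 and f = f]
        unfolding All_less_Suc2 by auto
      moreover have "(\<forall>m\<in>{..<Suc n}. f ((\<tau> \<circ> inv \<sigma>) m) = f m) \<longleftrightarrow> (\<forall>k<Suc n. f (\<sigma> k) = f (\<tau> k))"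
      proof -
        have "(\<forall>m\<in>\<sigma> ` {..<Suc n}. f ((\<tau> \<circ> inv \<sigma>) m) = f m)
            \<longleftrightarrow> (\<forall>k\<in>{..<Suc n}. f (\<tau> (inv \<sigma> (\<sigma> k))) = f (\<sigma> k))"
          unfolding Ball_image_comp by simp
        then show ?thesis
          unfolding permutes_image[OF \<sigma>] permutes_inverses(2)[OF \<sigma>] by auto
      qed
      ultimately show ?thesis
        by auto
    qed
    then show ?thesis
      unfolding invariant_colourings_def by auto
  qed
  finally show ?thesis
    by simp
qed

lemma sum_match_sum_diag:
  assumes "c < d"
  shows "(\<Sum>x\<in>idx d (Suc n). match_sum n \<beta> x x c e) =
    (if c = e then fact n * (pochhammer (real d) n / real d *
       (\<Sum>a<Suc n. \<beta> (a + 1) * ((real d - 1) * \<beta> (a + 1) + (\<Sum>b<Suc n. \<beta> (b + 1))))) else 0)"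
proof -
  define h where "h a = \<beta> (a + 1) * (((real d - 1) * \<beta> (a + 1) + (\<Sum>b<Suc n. \<beta> (b + 1))) / real d
    * pochhammer (real d) n)" for a
  let ?col = "\<lambda>\<mu> a. real (card {f \<in> invariant_colourings d {..<Suc n} \<mu>. f a = c})"
  have "(\<Sum>x\<in>idx d (Suc n). match_sum n \<beta> x x c e) = (\<Sum>\<sigma>\<in>perms (Suc n). \<Sum>\<tau>\<in>perms (Suc n).
      \<beta> (\<sigma> 0 + 1) * \<beta> (\<tau> 0 + 1) * (\<Sum>x\<in>idx d (Suc n). if tails_match n x x c e \<sigma> \<tau> then 1 else 0))"
    unfolding match_sum_def sum_distrib_left
    by (subst sum.swap, rule sum.cong[OF refl], subst sum.swap, rule refl)
  also have "\<dots> = (\<Sum>\<sigma>\<in>perms (Suc n). \<Sum>\<tau>\<in>perms (Suc n).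
      \<beta> (\<sigma> 0 + 1) * \<beta> (\<tau> 0 + 1) * (if c = e then ?col (\<tau> \<circ> inv \<sigma>) (\<sigma> 0) else 0))"
    by (intro sum.cong refl) (simp add: sum_indicator_eq_card card_tails_match_diag)
  also have "\<dots> = (if c = e then (\<Sum>\<sigma>\<in>perms (Suc n). \<beta> (\<sigma> 0 + 1) *
      (\<Sum>\<tau>\<in>perms (Suc n). \<beta> (\<tau> 0 + 1) * ?col (\<tau> \<circ> inv \<sigma>) (\<sigma> 0))) else 0)"
    by (cases "c = e") (simp_all add: sum_distrib_left mult.assoc)
  also have "\<dots> = (if c = e then (\<Sum>\<sigma>\<in>perms (Suc n). h (\<sigma> 0)) else 0)"
  proof -
    have "\<beta> (\<sigma> 0 + 1) * (\<Sum>\<tau>\<in>perms (Suc n). \<beta> (\<tau> 0 + 1) * ?col (\<tau> \<circ> inv \<sigma>) (\<sigma> 0)) = h (\<sigma> 0)"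
      if \<sigma>: "\<sigma> permutes {..<Suc n}" for \<sigma>
    proof -
      have "(\<Sum>\<tau>\<in>perms (Suc n). \<beta> (\<tau> 0 + 1) * ?col (\<tau> \<circ> inv \<sigma>) (\<sigma> 0))
          = (\<Sum>\<mu>\<in>perms (Suc n). \<beta> (\<mu> (\<sigma> 0) + 1) * ?col \<mu> (\<sigma> 0))"
        using sum_permutations_compose_right[OF \<sigma>, of "\<lambda>\<tau>. \<beta> (\<tau> 0 + 1) * ?col (\<tau> \<circ> inv \<sigma>) (\<sigma> 0)"]
        by (simp add: o_assoc[symmetric] permutes_inv_o(1)[OF \<sigma>])
      also have "\<dots> = ((real d - 1) * \<beta> (\<sigma> 0 + 1) + (\<Sum>b<Suc n. \<beta> (b + 1))) / real d
          * pochhammer (real d) n"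
        using sum_weighted_invariant_colourings[of "{..<Suc n}" "\<sigma> 0" c d "\<lambda>b. \<beta> (b + 1)"]
          permutes_in_image[OF \<sigma>, of 0] assms by simp
      finally show ?thesis
        unfolding h_def by (simp only: mult.assoc)
    qed
    then show ?thesis
      by (auto intro!: sum.cong)
  qed
  also have "\<dots> = (if c = e then fact n * (\<Sum>a<Suc n. h a) else 0)"
    using sum_permutes_apply[of "{..<Suc n}" 0 h] by simp
  also have "\<dots> = (if c = e then fact n * (pochhammer (real d) n / real d *
      (\<Sum>a<Suc n. \<beta> (a + 1) * ((real d - 1) * \<beta> (a + 1) + (\<Sum>b<Suc n. \<beta> (b + 1))))) else 0)"
  proof -
    have "h a = pochhammer (real d) n / real d * (\<beta> (a + 1) * ((real d - 1) * \<beta> (a + 1)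
        + (\<Sum>b<Suc n. \<beta> (b + 1))))" for a
      unfolding h_def by (simp only: times_divide_eq_left times_divide_eq_right mult_ac)
    then show ?thesis
      by (simp only: sum_distrib_left)
  qed
  finally show ?thesis .
qed

lemma real_binomial_times_fact:
  assumes "d \<ge> 1"
  shows "real (n + d - 1 choose n) * fact n = pochhammer (real d) n"
  using assms by (simp add: binomial_gbinomial gbinomial_pochhammer' of_nat_diff)

lemma sum_beta_weights:
  fixes \<beta> :: "nat \<Rightarrow> real"
  assumes "real (d - 1) * (\<Sum>i=1..N. (\<beta> i)^2) + (\<Sum>i=1..N. \<beta> i)^2 = 1" "d \<ge> 1"
  shows "(\<Sum>a<N. \<beta> (a + 1) * ((real d - 1) * \<beta> (a + 1) + (\<Sum>b<N. \<beta> (b + 1)))) = 1"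
proof -
  have "(\<Sum>a<N. \<beta> (a + 1) * ((real d - 1) * \<beta> (a + 1) + (\<Sum>b<N. \<beta> (b + 1))))
      = (real d - 1) * (\<Sum>a<N. (\<beta> (a + 1))^2) + (\<Sum>a<N. \<beta> (a + 1))^2"
    by (simp add: distrib_left sum.distrib sum_distrib_left sum_distrib_right power2_eq_square
        mult_ac)
  also have "\<dots> = 1"
    using assms(1)[unfolded One_nat_def sum.atLeast1_atMost_eq] assms(2) by (simp add: of_nat_diff)
  finally show ?thesis .
qed

lemma T_const_times_trace_weight:
  assumes "d \<ge> 1"
  shows "T_const d (Suc n) * ((1 / fact (Suc n))^2 * (fact n / real d * pochhammer (real d) n)) = 1"
proof -
  define P where "P = pochhammer (real d) n"
  define F :: real where "F = fact n"
  define B where "B = real (Suc n + d - 1 choose Suc n)"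
  define q where "q = real n + 1"
  define e where "e = real d + real n"
  have pos: "P > 0" "F > 0" "real d > 0" "q > 0" "e > 0"
    using assms by (simp_all add: P_def F_def q_def e_def pochhammer_pos)
  have "B * (q * F) = P * e"
    using real_binomial_times_fact[OF assms, of "Suc n"]
    by (simp add: B_def P_def F_def q_def e_def pochhammer_Suc algebra_simps)
  then have B: "B = P * e / (q * F)"
    using pos by (simp add: eq_divide_eq)
  have T_const: "T_const d (Suc n) = real d * q * e / B"
    using assms by (simp add: T_const_def B_def q_def e_def algebra_simps)
  have fact: "fact (Suc n) = q * F"
    by (simp add: q_def F_def)
  show ?thesis
    unfolding T_const fact P_def[symmetric] F_def[symmetric] B
    using pos by (simp add: field_simps power2_eq_square)
qed


lemma sum_kraus_kernel_diag:
  assumes "d \<ge> 1" "c < d"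
    and "real (d - 1) * (\<Sum>i=1..Suc n. (\<beta> i)^2) + (\<Sum>i=1..Suc n. \<beta> i)^2 = 1"
  shows "(\<Sum>x\<in>idx d (Suc n). kraus_kernel d n \<beta> x x c e)
    = (if c = e then complex_of_real ((1 / fact (Suc n))^2 * (fact n / real d * pochhammer (real d) n))
       else 0)"
proof -
  have "(\<Sum>x\<in>idx d (Suc n). kraus_kernel d n \<beta> x x c e)
      = complex_of_real ((1 / fact (Suc n))^2 * (\<Sum>x\<in>idx d (Suc n). match_sum n \<beta> x x c e))"
    by (simp add: kraus_kernel_eq_match_sum sum_distrib_left cong: sum.cong)
  then show ?thesis
    unfolding sum_match_sum_diag[OF assms(2)] sum_beta_weights[OF assms(3,1)] by simp
qed

lemma T_beta_trace:
  assumes "d \<ge> 1"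
    and "real (d - 1) * (\<Sum>i=1..Suc n. (\<beta> i)^2) + (\<Sum>i=1..Suc n. \<beta> i)^2 = 1"
  shows "(\<Sum>x\<in>idx d (Suc n). T_beta d (Suc n) \<beta> X x x) = (\<Sum>i<d. X i i)"
proof -
  define V where "V = (1 / fact (Suc n))^2 * (fact n / real d * pochhammer (real d) n)"
  have "(\<Sum>x\<in>idx d (Suc n). T_beta d (Suc n) \<beta> X x x)
      = complex_of_real (T_const d (Suc n)) *
        (\<Sum>c<d. \<Sum>e<d. X c e * (\<Sum>x\<in>idx d (Suc n). kraus_kernel d n \<beta> x x c e))"
    unfolding T_beta_kraus sum_distrib_left[symmetric]
    by (simp add: sum_distrib_left sum.swap[of _ "idx d (Suc n)"])
  also have "\<dots> = complex_of_real (T_const d (Suc n)) * (\<Sum>c<d. X c c * complex_of_real V)"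
  proof -
    have "(\<Sum>e<d. X c e * (\<Sum>x\<in>idx d (Suc n). kraus_kernel d n \<beta> x x c e)) = X c c * complex_of_real V"
      if "c < d" for c
    proof -
      have "X c e * (\<Sum>x\<in>idx d (Suc n). kraus_kernel d n \<beta> x x c e)
          = (if c = e then X c c * complex_of_real V else 0)" for e
        using sum_kraus_kernel_diag[OF assms(1) that assms(2)] unfolding V_def by simp
      then show ?thesis
        using that by simp
    qed
    then show ?thesis
      by simp
  qed
  also have "\<dots> = complex_of_real (T_const d (Suc n) * V) * (\<Sum>c<d. X c c)"
    by (simp add: sum_distrib_left sum_distrib_right mult_ac)
  finally show ?thesis
    unfolding V_def T_const_times_trace_weight[OF assms(1)] by simp
qed

theorem mainTheorem13:
  fixes d N :: nat and \<beta> :: "nat \<Rightarrow> real"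
  assumes "d \<ge> 2" and "N \<ge> 1"
    and "real (d - 1) * (\<Sum>i=1..N. (\<beta> i)^2) + (\<Sum>i=1..N. \<beta> i)^2 = 1"
  shows "quantum_channel d N (T_beta d N \<beta>) \<and>
         (\<forall>x\<in>idx d (Suc N). \<forall>y\<in>idx d (Suc N). choi d (T_beta d N \<beta>) x y = C_beta d N \<beta> x y)"
proof -
  obtain n where N: "N = Suc n"
    using assms(2) by (cases N) auto
  have "d \<ge> 1"
    using assms(1) by simp
  have "quantum_channel d (Suc n) (T_beta d (Suc n) \<beta>)"
    unfolding quantum_channel_def
    using T_beta_linear T_beta_completely_positive T_beta_trace[OF \<open>d \<ge> 1\<close> assms(3)[unfolded N]]
    by blast
  moreover have "\<forall>x\<in>idx d (Suc (Suc n)). \<forall>y\<in>idx d (Suc (Suc n)).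
      choi d (T_beta d (Suc n) \<beta>) x y = C_beta d (Suc n) \<beta> x y"
    using choi_T_beta by blast
  ultimately show ?thesis
    unfolding N by blast
qed

end
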